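(* Let $\nu>0$, $b>0$ and let $f:\mathbb{R}\to\mathbb{R}$ be continuously differentiable with: $f(0)=f(a)=f(1)=0$ for some $a\in(0,1)$; $f<0$ on $(0,a)$, $f>0$ on $(a,1)$; $f'(0)<0$, $f'(a)>0$, $f'(1)<0$; $\int_0^1 f(v)\,dv\ge 0$; and there exists $v_\ast\in(a,1)$ such that $f''(v)>0$ for $v\in[0,v_\ast)$ and $f''(v)<0$ for $v\in(v_\ast,1]$. Let $\hat v:\mathbb{R}\to\mathbb{R}$ be a monotone increasing $C^2$ function with $\hat v(-\infty)=0$, $\hat v(+\infty)=1$, satisfying $c\hat v_x=\nu\hat v_{xx}+bf(\hat v)$ for some constant $c\in\mathbb{R}$. Then: (i) $\frac{f(\hat v)}{\hat v_x}$ is strictly monotone increasing on $\mathbb{R}$; in particular $-\frac{d^2}{dx^2}\log\hat v_x=-\frac{d}{dx}\frac{\hat v_{xx}}{\hat v_x}=\frac{b}{\nu}\frac{d}{dx}\frac{f(\hat v)}{\hat v_x}>0$, i.e. $\hat v_x$ is strictly log-concave. (ii) $\gamma_-:=\inf_{x\in\mathbb{R}}\frac{b}{\nu}\frac{f(\hat v)}{\hat v_x}(x)=\frac{c}{2\nu}-\sqrt{\left(\frac{c}{2\nu}\right)^2-\frac{b}{\nu}f'(0)}$ and $\gamma_+:=\sup_{x\in\mathbb{R}}\frac{b}{\nu}\frac{f(\hat v)}{\hat v_x}(x)=\frac{c}{2\nu}+\sqrt{\left(\frac{c}{2\nu}\right)^2-\frac{b}{\nu}f'(1)}$. (iii) $\int_{-\infty}^0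 e^{-2\alpha\frac{c}{\nu}x}(\hat v_x^2+\hat v_{xx}^2)\,dx<\infty$ for all $\alpha\in\mathbb{R}$ with $\alpha\frac{c}{\nu}<\frac{c}{\nu}-\gamma_-$, and $\int_0^{\infty} e^{-2\alpha\frac{c}{\nu}x}(\hat v_x^2+\hat v_{xx}^2)\,dx<\infty$ for all $\alpha\in\mathbb{R}$ with $\alpha\frac{c}{\nu}>\frac{c}{\nu}-\gamma_+$. In particular $\int_{\mathbb{R}}e^{-\frac{c}{\nu}x}(\hat v_x^2+\hat v_{xx}^2)\,dx<\infty$.
   Context: $\hat v$ is a travelling wave (with wave speed $c$, which is $\ge 0$ under $\int_0^1 f\ge 0$) of $\partial_t v=\nu v_{xx}+bf(v)$; the assumption on $f''$ includes that $f$ is twice differentiable on $[0,1]$. *)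

theory Defs
  imports "HOL-Analysis.Analysis"
begin

end

theory Submission
  imports Defs
begin

text \<open>Put \<open>\<kappa> = c / \<nu>\<close> and \<open>q = (b / \<nu>) f(vh) / vh'\<close>. The wave equation gives
  \<open>vh'' / vh' = \<kappa> - q\<close> and turns \<open>q\<close> into a solution of the Riccati equation
  \<open>q' = q\<^sup>2 - \<kappa> q + g\<close> with \<open>g = (b / \<nu>) f'(vh)\<close>. Its right-hand side \<open>w\<close> solves the linear
  equation \<open>w' = (2 q - \<kappa>) w + h\<close>, where \<open>h = (b / \<nu>) f''(vh) vh'\<close> is positive below the
  inflection point and negative above it. A point with \<open>w \<le> 0\<close> would therefore make \<open>w\<close> negative
  all the way to \<open>-\<infinity>\<close> (or \<open>+\<infinity>\<close>); there \<open>q\<close> converges to the root of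
  \<open>L\<^sup>2 - \<kappa> L + g(\<mp>\<infinity>) = 0\<close> of the right sign, at which \<open>2 L - \<kappa>\<close> makes \<open>w\<close> move away from its
  limit \<open>0\<close>, a contradiction. So \<open>q\<close> increases strictly, which is (i). The Riccati equation
  blows up in finite time unless \<open>q\<close> is bounded, and the limits of \<open>q\<close> at \<open>\<mp>\<infinity>\<close> are the roots
  \<open>\<gamma>\<^sub>\<mp>\<close>, which is (ii). Finally \<open>vh' = exp (\<integral> (\<kappa> - q))\<close> grows or decays at the exponential rates
  \<open>\<kappa> - \<gamma>\<^sub>\<mp>\<close> at \<open>\<mp>\<infinity>\<close>, and \<open>vh''\<close> is a bounded multiple of \<open>vh'\<close>; this gives (iii).\<close>

section \<open>Comparison principles for ordinary differential equations\<close>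

lemma gronwall_vanishing:
  fixes E E' :: "real \<Rightarrow> real"
  assumes deriv: "\<And>x. (E has_real_derivative E' x) (at x)"
    and bound: "\<And>x. \<bar>E' x\<bar> \<le> K * E x"
    and nonneg: "\<And>x. 0 \<le> E x"
    and zero: "E x0 = 0"
  shows "E x = 0"
proof (cases "x0 \<le> x")
  case True
  have "E x * exp (- K * x) \<le> E x0 * exp (- K * x0)"
  proof (rule DERIV_nonpos_imp_nonincreasing[OF True])
    fix t
    have "((\<lambda>t. E t * exp (- K * t)) has_real_derivative (E' t - K * E t) * exp (- K * t)) (at t)"
      by (rule derivative_eq_intros deriv refl | simp add: algebra_simps)+
    moreover have "(E' t - K * E t) * exp (- K * t) \<le> 0"
      using bound[of t] by (intro mult_nonpos_nonneg) auto
    ultimately show "\<exists>y. ((\<lambda>t. E t * exp (- K * t)) has_real_derivative y) (at t) \<and> y \<le> 0"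
      by blast
  qed
  then show ?thesis
    using zero nonneg[of x] by (simp add: mult_le_0_iff)
next
  case False
  have "E x * exp (K * x) \<le> E x0 * exp (K * x0)"
  proof (rule DERIV_nonneg_imp_nondecreasing[of x x0])
    show "x \<le> x0" using False by simp
    fix t
    have "((\<lambda>t. E t * exp (K * t)) has_real_derivative (E' t + K * E t) * exp (K * t)) (at t)"
      by (rule derivative_eq_intros deriv refl | simp add: algebra_simps)+
    moreover have "0 \<le> (E' t + K * E t) * exp (K * t)"
      using bound[of t] by (intro mult_nonneg_nonneg) auto
    ultimately show "\<exists>y. ((\<lambda>t. E t * exp (K * t)) has_real_derivative y) (at t) \<and> 0 \<le> y"
      by blast
  qed
  then show ?thesis
    using zero nonneg[of x] by (simp add: mult_le_0_iff)
qed

lemma linear_ode_negative_before: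
  fixes w A h :: "real \<Rightarrow> real"
  assumes "y < z"
    and deriv: "\<And>t. (w has_real_derivative A t * w t + h t) (at t)"
    and A_cont: "continuous_on UNIV A"
    and h_pos: "\<And>t. y < t \<Longrightarrow> t < z \<Longrightarrow> 0 < h t"
    and "w z \<le> 0"
  shows "w y < 0"
proof -
  define F where "F x = integral {y..x} A" for x
  have F_deriv_within: "(F has_real_derivative A t) (at t within {y..z})" if "t \<in> {y..z}" for t
    unfolding F_def by (rule integral_has_real_derivative[OF continuous_on_subset[OF A_cont] that]) auto
  have F_deriv: "(F has_real_derivative A t) (at t)" if "y < t" "t < z" for t
  proof -
    have "(F has_real_derivative A t) (at t within {y<..<z})"
      by (rule DERIV_subset[OF F_deriv_within]) (use that in auto)
    then show ?thesis
      using at_within_open[of t "{y<..<z}"] that by auto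
  qed
  have "w y * exp (- F y) < w z * exp (- F z)"
  proof (rule DERIV_pos_imp_increasing_open[OF \<open>y < z\<close>])
    fix t assume t: "y < t" "t < z"
    have "((\<lambda>t. w t * exp (- F t)) has_real_derivative
            (A t * w t + h t) * exp (- F t) + exp (- F t) * - A t * w t) (at t)"
      by (rule derivative_eq_intros deriv F_deriv[OF t] refl)+
    moreover have "(A t * w t + h t) * exp (- F t) + exp (- F t) * - A t * w t = h t * exp (- F t)"
      by (simp add: algebra_simps)
    ultimately show "\<exists>d. ((\<lambda>t. w t * exp (- F t)) has_real_derivative d) (at t) \<and> 0 < d"
      using h_pos[OF t] by auto
  next
    show "continuous_on {y..z} (\<lambda>t. w t * exp (- F t))"
      by (intro continuous_intros DERIV_continuous_on[OF F_deriv_within]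
          DERIV_continuous_on[OF has_field_derivative_at_within[OF deriv]])
  qed
  also have "\<dots> \<le> 0" using \<open>w z \<le> 0\<close> by (simp add: mult_le_0_iff)
  finally show ?thesis by (simp add: mult_less_0_iff)
qed

lemma deriv_tendsto_zero_at_top:
  fixes r r' :: "real \<Rightarrow> real"
  assumes deriv: "\<And>x. (r has_real_derivative r' x) (at x)"
    and r_lim: "(r \<longlongrightarrow> L) at_top" and r'_lim: "(r' \<longlongrightarrow> m) at_top"
  shows "m = 0"
proof -
  have "((\<lambda>x. r x / x) \<longlongrightarrow> m) at_top"
    by (rule lhospital_at_top_at_top[where g' = "\<lambda>_. 1"])
      (use deriv r'_lim in \<open>auto intro!: filterlim_ident derivative_eq_intros\<close>)
  moreover have "((\<lambda>x. r x / x) \<longlongrightarrow> L * 0) at_top"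
    unfolding divide_inverse by (intro tendsto_mult r_lim tendsto_inverse_0_at_top filterlim_ident)
  ultimately show ?thesis
    by (metis tendsto_unique trivial_limit_at_top_linorder mult_zero_right)
qed

lemma deriv_tendsto_zero_at_bot:
  fixes r r' :: "real \<Rightarrow> real"
  assumes deriv: "\<And>x. (r has_real_derivative r' x) (at x)"
    and r_lim: "(r \<longlongrightarrow> L) at_bot" and r'_lim: "(r' \<longlongrightarrow> m) at_bot"
  shows "m = 0"
proof -
  have "- m = 0"
  proof (rule deriv_tendsto_zero_at_top)
    show "((\<lambda>x. r (- x)) has_real_derivative - r' (- x)) (at x)" for x
      using deriv[of "- x"] DERIV_mirror by blast
    show "((\<lambda>x. r (- x)) \<longlongrightarrow> L) at_top"
      using r_lim by (simp add: filterlim_at_bot_mirror)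
    show "((\<lambda>x. - r' (- x)) \<longlongrightarrow> - m) at_top"
      using r'_lim by (intro tendsto_minus) (simp add: filterlim_at_bot_mirror)
  qed
  then show ?thesis by simp
qed

lemma mono_tendsto_INF_at_bot:
  fixes r :: "real \<Rightarrow> real"
  assumes "mono r" and bdd: "bdd_below (range r)"
  shows "(r \<longlongrightarrow> (INF x. r x)) at_bot"
proof (rule decreasing_tendsto)
  show "\<forall>\<^sub>F x in at_bot. (INF x. r x) \<le> r x"
    using bdd by (auto intro: always_eventually cINF_lower)
next
  fix y assume "(INF x. r x) < y"
  then obtain x where "r x < y"
    using cINF_less_iff[OF _ bdd] by auto
  then show "\<forall>\<^sub>F t in at_bot. r t < y"
    unfolding eventually_at_bot_linorder using monoD[OF \<open>mono r\<close>] by (meson le_less_trans)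
qed

lemma mono_tendsto_SUP_at_top:
  fixes r :: "real \<Rightarrow> real"
  assumes "mono r" and bdd: "bdd_above (range r)"
  shows "(r \<longlongrightarrow> (SUP x. r x)) at_top"
proof (rule increasing_tendsto)
  show "\<forall>\<^sub>F x in at_top. r x \<le> (SUP x. r x)"
    using bdd by (auto intro: always_eventually cSUP_upper)
next
  fix y assume "y < (SUP x. r x)"
  then obtain x where "y < r x"
    using less_cSUP_iff[OF _ bdd] by auto
  then show "\<forall>\<^sub>F t in at_top. y < r t"
    unfolding eventually_at_top_linorder using monoD[OF \<open>mono r\<close>] by (meson less_le_trans)
qed

lemma linear_ode_negative_not_tendsto_zero_at_bot:
  fixes w A h :: "real \<Rightarrow> real"
  assumes deriv: "\<And>t. (w has_real_derivative A t * w t + h t) (at t)"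
    and signs: "\<forall>\<^sub>F t in at_bot. A t < 0 \<and> 0 \<le> h t \<and> w t < 0"
    and w_lim: "(w \<longlongrightarrow> 0) at_bot"
  shows False
proof -
  obtain Y where Y: "\<And>t. t \<le> Y \<Longrightarrow> A t < 0 \<and> 0 \<le> h t \<and> w t < 0"
    using signs unfolding eventually_at_bot_linorder by blast
  have "w t \<le> w Y" if "t \<le> Y" for t
  proof (rule DERIV_nonneg_imp_nondecreasing[OF that])
    fix s assume "s \<le> Y"
    then have "0 \<le> A s * w s + h s"
      using Y[of s] by (auto intro!: add_nonneg_nonneg mult_nonpos_nonpos)
    then show "\<exists>y. (w has_real_derivative y) (at s) \<and> 0 \<le> y"
      using deriv by blast
  qed
  then have "0 \<le> w Y"
    by (intro tendsto_upperbound[OF w_lim]) (auto simp: eventually_at_bot_linorder)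
  then show False
    using Y[of Y] by simp
qed

lemma antimono_bdd_above_convergent_at_bot:
  fixes r :: "real \<Rightarrow> real"
  assumes antimono: "\<And>s t. t \<le> s \<Longrightarrow> s \<le> X \<Longrightarrow> r s \<le> r t"
    and bound: "\<And>t. t \<le> X \<Longrightarrow> r t \<le> B"
  obtains L where "(r \<longlongrightarrow> L) at_bot"
proof -
  \<comment> \<open>Clamping the argument at \<open>X\<close> gives a globally monotone function that agrees with \<open>- r\<close> near \<open>-\<infinity>\<close>.\<close>
  define q where "q t = - r (min t X)" for t
  have "mono q"
    unfolding q_def by (rule monoI) (simp add: antimono)
  moreover have "bdd_below (range q)"
    unfolding q_def by (rule bdd_belowI2[of _ "- B"]) (simp add: bound)
  ultimately have "((\<lambda>t. - q t) \<longlongrightarrow> - (INF t. q t)) at_bot"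
    by (intro tendsto_minus mono_tendsto_INF_at_bot)
  moreover have "\<forall>\<^sub>F t in at_bot. - q t = r t"
    unfolding q_def eventually_at_bot_linorder by (auto intro: exI[of _ X])
  ultimately have "(r \<longlongrightarrow> - (INF t. q t)) at_bot"
    by (rule Lim_transform_eventually)
  then show ?thesis ..
qed

section \<open>Riccati equations\<close>

lemma riccati_mirror:
  fixes r g :: "real \<Rightarrow> real"
  assumes "\<And>t. (r has_real_derivative (r t)\<^sup>2 - k * r t + g t) (at t)"
  shows "((\<lambda>t. - r (- t)) has_real_derivative
           (- r (- t))\<^sup>2 - (- k) * (- r (- t)) + g (- t)) (at t)"
proof -
  have "((\<lambda>t. r (- t)) has_real_derivative - ((r (- t))\<^sup>2 - k * r (- t) + g (- t))) (at t)"
    using assms[of "- t"] DERIV_mirror by blast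
  from DERIV_minus[OF this] show ?thesis by (simp add: algebra_simps)
qed

lemma nonpos_quadratic_root:
  fixes L k g :: real
  assumes "L \<le> 0" and root: "L\<^sup>2 - k * L + g = 0" and "g < 0"
  shows "L = k / 2 - sqrt ((k / 2)\<^sup>2 - g)"
proof -
  have "L * (L - k) > 0" using root \<open>g < 0\<close> by (simp add: power2_eq_square algebra_simps)
  then have "L < k / 2" using \<open>L \<le> 0\<close> by (auto simp: zero_less_mult_iff)
  moreover have "(k / 2)\<^sup>2 - g = (L - k / 2)\<^sup>2"
    using root by (simp add: power2_eq_square algebra_simps)
  ultimately show ?thesis by simp
qed

lemma riccati_limit_root_at_bot:
  fixes r g :: "real \<Rightarrow> real"
  assumes r_deriv: "\<And>t. (r has_real_derivative (r t)\<^sup>2 - k * r t + g t) (at t)"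
    and r_lim: "(r \<longlongrightarrow> L) at_bot" and g_lim: "(g \<longlongrightarrow> g0) at_bot"
  shows "L\<^sup>2 - k * L + g0 = 0"
proof -
  have "((\<lambda>t. (r t)\<^sup>2 - k * r t + g t) \<longlongrightarrow> L\<^sup>2 - k * L + g0) at_bot"
    by (intro tendsto_intros r_lim g_lim)
  then show ?thesis
    by (rule deriv_tendsto_zero_at_bot[OF r_deriv r_lim])
qed

lemma riccati_limit_at_bot:
  fixes r g :: "real \<Rightarrow> real"
  assumes r_deriv: "\<And>t. (r has_real_derivative (r t)\<^sup>2 - k * r t + g t) (at t)"
    and r_lim: "(r \<longlongrightarrow> L) at_bot" and g_lim: "(g \<longlongrightarrow> g0) at_bot" and "g0 < 0"
    and r_nonpos: "\<forall>\<^sub>F t in at_bot. r t \<le> 0"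
  shows "L = k / 2 - sqrt ((k / 2)\<^sup>2 - g0)"
proof (rule nonpos_quadratic_root)
  show "L \<le> 0"
    by (rule tendsto_upperbound[OF r_lim r_nonpos]) simp
qed (rule riccati_limit_root_at_bot[OF r_deriv r_lim g_lim], fact)

lemma riccati_limit_at_top:
  fixes r g :: "real \<Rightarrow> real"
  assumes r_deriv: "\<And>t. (r has_real_derivative (r t)\<^sup>2 - k * r t + g t) (at t)"
    and r_lim: "(r \<longlongrightarrow> L) at_top" and g_lim: "(g \<longlongrightarrow> g0) at_top" and "g0 < 0"
    and r_nonneg: "\<forall>\<^sub>F t in at_top. 0 \<le> r t"
  shows "L = k / 2 + sqrt ((k / 2)\<^sup>2 - g0)"
proof -
  have "- L = - k / 2 - sqrt ((- k / 2)\<^sup>2 - g0)"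
  proof (rule riccati_limit_at_bot[OF riccati_mirror[OF r_deriv]])
    show "((\<lambda>t. - r (- t)) \<longlongrightarrow> - L) at_bot"
      using r_lim by (simp add: filterlim_at_bot_mirror tendsto_minus)
    show "((\<lambda>t. g (- t)) \<longlongrightarrow> g0) at_bot"
      using g_lim by (simp add: filterlim_at_bot_mirror)
    show "\<forall>\<^sub>F t in at_bot. - r (- t) \<le> 0"
      using r_nonneg by (simp add: at_bot_mirror eventually_filtermap)
  qed fact
  then show ?thesis by simp
qed

lemma riccati_rhs_deriv:
  fixes r g h :: "real \<Rightarrow> real"
  assumes r_deriv: "\<And>t. (r has_real_derivative (r t)\<^sup>2 - k * r t + g t) (at t)"
    and g_deriv: "\<And>t. (g has_real_derivative h t) (at t)"
  shows "((\<lambda>t. (r t)\<^sup>2 - k * r t + g t) has_real_derivative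
           (2 * r t - k) * ((r t)\<^sup>2 - k * r t + g t) + h t) (at t)"
proof -
  have "((\<lambda>t. (r t)\<^sup>2 - k * r t + g t) has_real_derivative
          2 * r t * ((r t)\<^sup>2 - k * r t + g t) - k * ((r t)\<^sup>2 - k * r t + g t) + h t) (at t)"
    by (rule derivative_eq_intros r_deriv g_deriv refl | simp)+
  then show ?thesis by (simp add: algebra_simps)
qed

lemma riccati_rhs_pos_left:
  fixes r g h :: "real \<Rightarrow> real"
  assumes r_deriv: "\<And>t. (r has_real_derivative (r t)\<^sup>2 - k * r t + g t) (at t)"
    and g_deriv: "\<And>t. (g has_real_derivative h t) (at t)"
    and h_pos: "\<And>t. t < x0 \<Longrightarrow> 0 < h t"
    and g_lim: "(g \<longlongrightarrow> g0) at_bot" and "g0 < 0"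
    and r_nonpos: "\<forall>\<^sub>F t in at_bot. r t \<le> 0"
  shows "0 < (r x0)\<^sup>2 - k * r x0 + g x0"
proof (rule ccontr)
  define w where "w t = (r t)\<^sup>2 - k * r t + g t" for t
  assume "\<not> 0 < (r x0)\<^sup>2 - k * r x0 + g x0"
  then have "w x0 \<le> 0" by (simp add: w_def)
  have r_deriv': "(r has_real_derivative w t) (at t)" for t
    unfolding w_def by (rule r_deriv)
  have w_deriv: "(w has_real_derivative (2 * r t - k) * w t + h t) (at t)" for t
    unfolding w_def[abs_def] by (rule riccati_rhs_deriv[OF r_deriv g_deriv])
  have r_cont: "continuous_on UNIV r"
    by (rule DERIV_continuous_on[OF has_field_derivative_at_within[OF r_deriv']])
  have w_neg: "w t < 0" if "t < x0" for t
    by (rule linear_ode_negative_before[OF that w_deriv _ h_pos \<open>w x0 \<le> 0\<close>])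
      (auto intro!: continuous_intros r_cont)
  obtain N where N: "\<And>t. t \<le> N \<Longrightarrow> r t \<le> 0"
    using r_nonpos unfolding eventually_at_bot_linorder by blast
  define X where "X = min N x0"
  have "X \<le> x0" and X: "\<And>t. t \<le> X \<Longrightarrow> r t \<le> 0"
    using N by (auto simp: X_def)
  have w_nonpos: "w t \<le> 0" if "t \<le> x0" for t
    using w_neg[of t] \<open>w x0 \<le> 0\<close> that by (cases "t = x0") auto
  have r_antimono: "r s \<le> r t" if "t \<le> s" "s \<le> X" for s t
  proof (rule DERIV_nonpos_imp_nonincreasing[OF that(1)])
    fix u assume "t \<le> u" "u \<le> s"
    then have "w u \<le> 0" using that \<open>X \<le> x0\<close> by (intro w_nonpos) linarith
    then show "\<exists>y. (r has_real_derivative y) (at u) \<and> y \<le> 0" using r_deriv' by blast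
  qed
  obtain L where r_lim: "(r \<longlongrightarrow> L) at_bot"
    using antimono_bdd_above_convergent_at_bot[of X r 0] r_antimono X by blast
  have "(w \<longlongrightarrow> L\<^sup>2 - k * L + g0) at_bot"
    unfolding w_def[abs_def] by (intro tendsto_intros r_lim g_lim)
  then have w_lim: "(w \<longlongrightarrow> 0) at_bot"
    by (simp add: riccati_limit_root_at_bot[OF r_deriv r_lim g_lim])
  have discr_pos: "0 < (k / 2)\<^sup>2 - g0"
    using \<open>g0 < 0\<close> zero_le_power2[of "k / 2"] by linarith
  have "((\<lambda>t. 2 * r t - k) \<longlongrightarrow> 2 * L - k) at_bot"
    by (intro tendsto_intros r_lim)
  moreover have "2 * L - k < 0"
    using riccati_limit_at_bot[OF r_deriv r_lim g_lim \<open>g0 < 0\<close> r_nonpos] discr_pos by simp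
  ultimately have "\<forall>\<^sub>F t in at_bot. 2 * r t - k < 0"
    by (rule order_tendstoD(2))
  moreover have "\<forall>\<^sub>F t in at_bot. t \<le> x0 - 1"
    by simp
  ultimately have "\<forall>\<^sub>F t in at_bot. 2 * r t - k < 0 \<and> 0 \<le> h t \<and> w t < 0"
    by eventually_elim (auto intro: w_neg less_imp_le[OF h_pos])
  then show False
    by (rule linear_ode_negative_not_tendsto_zero_at_bot[OF w_deriv _ w_lim])
qed

lemma riccati_rhs_pos_right:
  fixes r g h :: "real \<Rightarrow> real"
  assumes r_deriv: "\<And>t. (r has_real_derivative (r t)\<^sup>2 - k * r t + g t) (at t)"
    and g_deriv: "\<And>t. (g has_real_derivative h t) (at t)"
    and h_neg: "\<And>t. x0 < t \<Longrightarrow> h t < 0"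
    and g_lim: "(g \<longlongrightarrow> g1) at_top" and "g1 < 0"
    and r_nonneg: "\<forall>\<^sub>F t in at_top. 0 \<le> r t"
  shows "0 < (r x0)\<^sup>2 - k * r x0 + g x0"
proof -
  have "0 < (- r (- (- x0)))\<^sup>2 - (- k) * (- r (- (- x0))) + g (- (- x0))"
  proof (rule riccati_rhs_pos_left[OF riccati_mirror[OF r_deriv]])
    show "((\<lambda>t. g (- t)) has_real_derivative - h (- t)) (at t)" for t
      using g_deriv[of "- t"] DERIV_mirror by blast
    show "0 < - h (- t)" if "t < - x0" for t
      using h_neg[of "- t"] that by simp
    show "((\<lambda>t. g (- t)) \<longlongrightarrow> g1) at_bot"
      using g_lim by (simp add: filterlim_at_bot_mirror)
    show "\<forall>\<^sub>F t in at_bot. - r (- t) \<le> 0"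
      using r_nonneg by (simp add: at_bot_mirror eventually_filtermap)
  qed fact
  then show ?thesis by simp
qed

lemma quadratic_ge_half_square:
  fixes x k g M :: real
  assumes "\<bar>g\<bar> \<le> M" and "2 * \<bar>k\<bar> + 2 * M + 2 \<le> \<bar>x\<bar>"
  shows "x\<^sup>2 / 2 \<le> x\<^sup>2 - k * x + g"
proof -
  have "0 \<le> M" using assms(1) by simp
  have "(2 * \<bar>k\<bar> + 2 * M + 2) * \<bar>x\<bar> \<le> \<bar>x\<bar> * \<bar>x\<bar>"
    using assms(2) \<open>0 \<le> M\<close> by (intro mult_right_mono) auto
  then have "2 * \<bar>x\<bar> + 2 * (M * \<bar>x\<bar>) + 2 * (\<bar>k\<bar> * \<bar>x\<bar>) \<le> x * x"
    by (simp add: algebra_simps abs_mult_self_eq)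
  moreover have "M \<le> M * \<bar>x\<bar>"
    using assms(2) \<open>0 \<le> M\<close> mult_left_mono[of 1 "\<bar>x\<bar>" M] by simp
  moreover have "k * x \<le> \<bar>k\<bar> * \<bar>x\<bar>"
    by (metis abs_ge_self abs_mult)
  ultimately show ?thesis
    using assms(1) abs_ge_zero[of x] unfolding power2_eq_square by linarith
qed

lemma riccati_bounded_below:
  fixes r g :: "real \<Rightarrow> real"
  assumes r_deriv: "\<And>t. (r has_real_derivative (r t)\<^sup>2 - k * r t + g t) (at t)"
    and rhs_nonneg: "\<And>t. 0 \<le> (r t)\<^sup>2 - k * r t + g t"
    and g_bound: "\<And>t. \<bar>g t\<bar> \<le> M"
  shows "- (2 * \<bar>k\<bar> + 2 * M + 2) \<le> r x"
proof (rule ccontr)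
  define R where "R = 2 * \<bar>k\<bar> + 2 * M + 2"
  assume "\<not> - (2 * \<bar>k\<bar> + 2 * M + 2) \<le> r x"
  then have "r x < - R" by (simp add: R_def)
  have "0 \<le> M" using g_bound[of x] by simp
  have below: "r t < - R" if "t \<le> x" for t
    using DERIV_nonneg_imp_nondecreasing[OF that, of r] r_deriv rhs_nonneg \<open>r x < - R\<close>
    by fastforce
  have superquadratic: "(r t)\<^sup>2 / 2 \<le> (r t)\<^sup>2 - k * r t + g t" if "t \<le> x" for t
    by (rule quadratic_ge_half_square[OF g_bound]) (use below[OF that] \<open>0 \<le> M\<close> in \<open>simp add: R_def\<close>)
  \<comment> \<open>Since \<open>r' \<ge> r\<^sup>2 / 2\<close>, the function \<open>1 / r + t / 2\<close> is nonincreasing on \<open>(-\<infinity>, x]\<close>; at \<open>y\<close> this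
    forces \<open>1 / r y \<ge> 1 / 2\<close>, although \<open>r y < 0\<close>.\<close>
  define y where "y = x + 2 / r x - 1"
  have "y \<le> x" using \<open>r x < - R\<close> \<open>0 \<le> M\<close> by (simp add: y_def R_def divide_neg_pos)
  have "inverse (r x) + x / 2 \<le> inverse (r y) + y / 2"
  proof (rule DERIV_nonpos_imp_nonincreasing[OF \<open>y \<le> x\<close>])
    fix t assume t: "y \<le> t" "t \<le> x"
    have "r t \<noteq> 0" using below[of t] t \<open>0 \<le> M\<close> by (auto simp: R_def)
    have "((\<lambda>t. inverse (r t) + t / 2) has_real_derivative
            - (((r t)\<^sup>2 - k * r t + g t) * inverse (r t ^ 2)) + 1 / 2) (at t)"
      by (rule derivative_eq_intros r_deriv \<open>r t \<noteq> 0\<close> refl | simp add: eval_nat_numeral)+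
    moreover have "1 / 2 \<le> ((r t)\<^sup>2 - k * r t + g t) * inverse (r t ^ 2)"
      using superquadratic[of t] t \<open>r t \<noteq> 0\<close> by (simp add: field_simps)
    ultimately show "\<exists>d. ((\<lambda>t. inverse (r t) + t / 2) has_real_derivative d) (at t) \<and> d \<le> 0"
      by (intro exI conjI) auto
  qed
  then have "1 / 2 \<le> inverse (r y)"
    unfolding y_def by (simp add: field_simps)
  moreover have "r y < 0" using below[OF \<open>y \<le> x\<close>] \<open>0 \<le> M\<close> by (simp add: R_def)
  ultimately show False by (simp add: inverse_eq_divide divide_less_0_iff)
qed

lemma riccati_bounded_above:
  fixes r g :: "real \<Rightarrow> real"
  assumes r_deriv: "\<And>t. (r has_real_derivative (r t)\<^sup>2 - k * r t + g t) (at t)"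
    and rhs_nonneg: "\<And>t. 0 \<le> (r t)\<^sup>2 - k * r t + g t"
    and g_bound: "\<And>t. \<bar>g t\<bar> \<le> M"
  shows "r x \<le> 2 * \<bar>k\<bar> + 2 * M + 2"
proof -
  have "- (2 * \<bar>- k\<bar> + 2 * M + 2) \<le> - r (- (- x))"
  proof (rule riccati_bounded_below[OF riccati_mirror[OF r_deriv]])
    show "0 \<le> (- r (- t))\<^sup>2 - (- k) * (- r (- t)) + g (- t)" for t
      using rhs_nonneg[of "- t"] by simp
  qed (rule g_bound)
  then show ?thesis by simp
qed

section \<open>Exponentially weighted integrability\<close>

lemma absolutely_integrable_on_atLeast_exp_decay:
  fixes F :: "real \<Rightarrow> real"
  assumes F_cont: "continuous_on {0..} F" and "0 < e"
    and bound: "\<And>x. X \<le> x \<Longrightarrow> \<bar>F x\<bar> \<le> C * exp (- e * x)"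
  shows "F absolutely_integrable_on {0..}"
proof -
  define Y where "Y = max X 0"
  have "F absolutely_integrable_on {0..Y}"
    by (rule absolutely_integrable_continuous_real[OF continuous_on_subset[OF F_cont]]) auto
  moreover have "F absolutely_integrable_on {Y..}"
  proof (rule measurable_bounded_by_integrable_imp_absolutely_integrable)
    show "F \<in> borel_measurable (lebesgue_on {Y..})"
      by (rule continuous_imp_measurable_on_sets_lebesgue[OF continuous_on_subset[OF F_cont]])
        (auto simp: Y_def)
    show "(\<lambda>x. C * exp (- e * x)) integrable_on {Y..}"
      using integrable_on_cmult_left[OF integrable_on_exp_minus_to_infinity[OF \<open>0 < e\<close>], of C] by simp
    show "norm (F x) \<le> C * exp (- e * x)" if "x \<in> {Y..}" for x
      using bound[of x] that by (simp add: Y_def)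
  qed simp
  ultimately have "F absolutely_integrable_on ({0..Y} \<union> {Y..})"
    by (rule absolutely_integrable_Un)
  moreover have "{0..Y} \<union> {Y..} = {0..}"
    by (auto simp: Y_def)
  ultimately show ?thesis by simp
qed

lemma exp_weighted_square_integrable_at_top:
  fixes u m :: "real \<Rightarrow> real"
  assumes u_deriv: "\<And>t. (u has_real_derivative u t * m t) (at t)"
    and u_nonneg: "\<And>t. 0 \<le> u t"
    and m_lim: "(m \<longlongrightarrow> \<mu>) at_top" and "\<mu> < \<beta>"
  shows "(\<lambda>t. exp (- 2 * \<beta> * t) * (u t)\<^sup>2) absolutely_integrable_on {0..}"
proof -
  define \<theta> where "\<theta> = (\<mu> + \<beta>) / 2"
  have "\<mu> < \<theta>" "\<theta> < \<beta>" using \<open>\<mu> < \<beta>\<close> by (auto simp: \<theta>_def)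
  obtain X where X: "\<And>t. X \<le> t \<Longrightarrow> m t < \<theta>"
    using order_tendstoD(2)[OF m_lim \<open>\<mu> < \<theta>\<close>] unfolding eventually_at_top_linorder by blast
  define C where "C = u X * exp (- \<theta> * X)"
  have u_le: "u t * exp (- \<theta> * t) \<le> C" if "X \<le> t" for t
    unfolding C_def
  proof (rule DERIV_nonpos_imp_nonincreasing[OF that])
    fix s assume "X \<le> s"
    have "((\<lambda>t. u t * exp (- \<theta> * t)) has_real_derivative u s * (m s - \<theta>) * exp (- \<theta> * s)) (at s)"
      by (rule derivative_eq_intros u_deriv refl | simp add: algebra_simps)+
    moreover have "u s * (m s - \<theta>) * exp (- \<theta> * s) \<le> 0"
      using X[OF \<open>X \<le> s\<close>] u_nonneg[of s] by (intro mult_nonpos_nonneg mult_nonneg_nonpos) auto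
    ultimately show "\<exists>y. ((\<lambda>t. u t * exp (- \<theta> * t)) has_real_derivative y) (at s) \<and> y \<le> 0"
      by blast
  qed
  show ?thesis
  proof (rule absolutely_integrable_on_atLeast_exp_decay)
    show "continuous_on {0..} (\<lambda>t. exp (- 2 * \<beta> * t) * (u t)\<^sup>2)"
      by (intro continuous_intros DERIV_continuous_on[OF has_field_derivative_at_within[OF u_deriv]])
    show "0 < 2 * (\<beta> - \<theta>)" using \<open>\<theta> < \<beta>\<close> by simp
    fix t assume "X \<le> t"
    have "(u t * exp (- \<theta> * t))\<^sup>2 \<le> C\<^sup>2"
      using u_le[OF \<open>X \<le> t\<close>] u_nonneg[of t] by (intro power_mono) auto
    moreover have "exp (- 2 * \<beta> * t) * (u t)\<^sup>2 = (u t * exp (- \<theta> * t))\<^sup>2 * exp (- (2 * (\<beta> - \<theta>)) * t)"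
      by (simp add: power2_eq_square algebra_simps flip: exp_add)
    ultimately show "\<bar>exp (- 2 * \<beta> * t) * (u t)\<^sup>2\<bar> \<le> C\<^sup>2 * exp (- (2 * (\<beta> - \<theta>)) * t)"
      by (simp add: mult_right_mono)
  qed
qed

lemma exp_weighted_square_integrable_at_bot:
  fixes u m :: "real \<Rightarrow> real"
  assumes u_deriv: "\<And>t. (u has_real_derivative u t * m t) (at t)"
    and u_nonneg: "\<And>t. 0 \<le> u t"
    and m_lim: "(m \<longlongrightarrow> \<mu>) at_bot" and "\<beta> < \<mu>"
  shows "(\<lambda>t. exp (- 2 * \<beta> * t) * (u t)\<^sup>2) absolutely_integrable_on {..0}"
proof -
  define F where "F t = exp (- 2 * \<beta> * t) * (u t)\<^sup>2" for t
  have "(\<lambda>t. exp (- 2 * (- \<beta>) * t) * (u (- t))\<^sup>2) absolutely_integrable_on {0..}"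
  proof (rule exp_weighted_square_integrable_at_top)
    show "((\<lambda>t. u (- t)) has_real_derivative u (- t) * - m (- t)) (at t)" for t
      using u_deriv[of "- t"] DERIV_mirror by fastforce
    show "((\<lambda>t. - m (- t)) \<longlongrightarrow> - \<mu>) at_top"
      using m_lim by (intro tendsto_minus) (simp add: filterlim_at_bot_mirror)
  qed (use u_nonneg \<open>\<beta> < \<mu>\<close> in auto)
  then have "(\<lambda>t. \<bar>- 1\<bar> * F (- t)) absolutely_integrable_on {0..}"
    by (simp add: F_def)
  then have "F absolutely_integrable_on uminus ` {0..}"
    by (rule absolutely_integrable_change_of_variables_1'[THEN iffD2, rotated -1])
      (auto intro!: derivative_eq_intros)
  then show ?thesis
    by (simp add: F_def[abs_def] image_uminus_atLeast)
qed

section \<open>Travelling waves\<close>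

lemma energy_derivative_bound:
  fixes s p q A B :: real
  assumes q_bound: "\<bar>q\<bar> \<le> A * \<bar>p\<bar> + B * \<bar>s\<bar>" and "0 \<le> A" "0 \<le> B"
  shows "\<bar>2 * s * p + 2 * p * q\<bar> \<le> (1 + 2 * A + B) * (s\<^sup>2 + p\<^sup>2)"
proof -
  have sp: "2 * (\<bar>s\<bar> * \<bar>p\<bar>) \<le> s\<^sup>2 + p\<^sup>2"
    using sum_squares_bound[of "\<bar>s\<bar>" "\<bar>p\<bar>"] by (simp add: power2_eq_square)
  have "\<bar>2 * s * p + 2 * p * q\<bar> \<le> \<bar>2 * s * p\<bar> + \<bar>2 * p * q\<bar>"
    by (rule abs_triangle_ineq)
  also have "\<dots> = 2 * (\<bar>s\<bar> * \<bar>p\<bar>) + 2 * \<bar>p\<bar> * \<bar>q\<bar>"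
    by (simp add: abs_mult)
  also have "\<dots> \<le> 2 * (\<bar>s\<bar> * \<bar>p\<bar>) + 2 * \<bar>p\<bar> * (A * \<bar>p\<bar> + B * \<bar>s\<bar>)"
    using q_bound by (intro add_left_mono mult_left_mono) auto
  also have "\<dots> = (1 + B) * (2 * (\<bar>s\<bar> * \<bar>p\<bar>)) + 2 * A * p\<^sup>2"
    by (simp add: power2_eq_square algebra_simps abs_mult_self_eq)
  also have "\<dots> \<le> (1 + B) * (s\<^sup>2 + p\<^sup>2) + 2 * A * (s\<^sup>2 + p\<^sup>2)"
    using sp \<open>0 \<le> A\<close> \<open>0 \<le> B\<close> by (intro add_mono mult_left_mono) auto
  finally show ?thesis by (simp add: algebra_simps)
qed

locale travelling_wave =
  fixes \<nu> b a vs c :: real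
    and f f1 f2 :: "real \<Rightarrow> real"
    and vh v1 v2 :: "real \<Rightarrow> real"
  assumes nu_pos: "0 < \<nu>" and b_pos: "0 < b"
    and f_deriv: "\<And>x. (f has_real_derivative f1 x) (at x)"
    and f1_cont: "continuous_on UNIV f1"
    and f2_deriv: "\<And>v. v \<in> {0..1} \<Longrightarrow> (f1 has_real_derivative f2 v) (at v within {0..1})"
    and a_in: "0 < a" "a < 1"
    and f_neg: "\<And>v. v \<in> {0<..<a} \<Longrightarrow> f v < 0"
    and f_pos: "\<And>v. v \<in> {a<..<1} \<Longrightarrow> 0 < f v"
    and f1_signs: "f1 0 < 0" "f1 1 < 0"
    and f2_pos: "\<And>v. v \<in> {0..<vs} \<Longrightarrow> 0 < f2 v"
    and f2_neg: "\<And>v. v \<in> {vs<..1} \<Longrightarrow> f2 v < 0"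
    and vh_mono: "mono vh"
    and vh_deriv: "\<And>x. (vh has_real_derivative v1 x) (at x)"
    and v1_deriv: "\<And>x. (v1 has_real_derivative v2 x) (at x)"
    and v2_cont: "continuous_on UNIV v2"
    and vh_bot: "(vh \<longlongrightarrow> 0) at_bot"
    and vh_top: "(vh \<longlongrightarrow> 1) at_top"
    and wave_eq: "\<And>x. c * v1 x = \<nu> * v2 x + b * f (vh x)"
begin

lemma vh_nonneg: "0 \<le> vh x"
  by (rule tendsto_upperbound[OF vh_bot])
    (auto simp: eventually_at_bot_linorder intro!: exI[of _ x] dest: monoD[OF vh_mono])

lemma vh_le_1: "vh x \<le> 1"
  by (rule tendsto_lowerbound[OF vh_top])
    (auto simp: eventually_at_top_linorder intro!: exI[of _ x] dest: monoD[OF vh_mono])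

lemma v1_nonneg: "0 \<le> v1 x"
proof (rule ccontr)
  assume "\<not> 0 \<le> v1 x"
  then have "v1 x < 0" by simp
  from DERIV_neg_dec_right[OF vh_deriv this]
  obtain d where "0 < d" and "\<forall>h>0. h < d \<longrightarrow> vh (x + h) < vh x"
    by blast
  then have "vh (x + d / 2) < vh x" by simp
  moreover have "vh x \<le> vh (x + d / 2)" using \<open>0 < d\<close> by (intro monoD[OF vh_mono]) simp
  ultimately show False by simp
qed

lemma v2_eq: "v2 x = (c * v1 x - b * f (vh x)) / \<nu>"
  using wave_eq[of x] nu_pos by (simp add: field_simps)

lemma f1_bounded: obtains M where "\<And>v. v \<in> {0..1} \<Longrightarrow> \<bar>f1 v\<bar> \<le> M"
proof -
  have "bounded (f1 ` {0..1})"
    by (intro compact_imp_bounded compact_continuous_image continuous_on_subset[OF f1_cont]) auto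
  then obtain M where "\<forall>y \<in> f1 ` {0..1}. norm y \<le> M"
    unfolding bounded_iff by blast
  then show ?thesis by (intro that) auto
qed

lemma f_lipschitz:
  obtains L where "0 \<le> L" "\<And>u z. u \<in> {0..1} \<Longrightarrow> z \<in> {0..1} \<Longrightarrow> \<bar>f u - f z\<bar> \<le> L * \<bar>u - z\<bar>"
proof -
  obtain M where M: "\<And>v. v \<in> {0..1} \<Longrightarrow> \<bar>f1 v\<bar> \<le> M"
    using f1_bounded by blast
  have "norm (f u - f z) \<le> M * norm (u - z)" if "u \<in> {0..1}" "z \<in> {0..1}" for u z
    by (rule field_differentiable_bound[where S = "{0..1}" and f' = f1])
      (use that M has_field_derivative_at_within[OF f_deriv] in auto)
  then have "\<bar>f u - f z\<bar> \<le> M * \<bar>u - z\<bar>" if "u \<in> {0..1}" "z \<in> {0..1}" for u z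
    using that by simp
  moreover have "0 \<le> M" using M[of 0] by simp
  ultimately show ?thesis using that by blast
qed

text \<open>If \<open>v1\<close> vanished somewhere, \<open>(vh, v1)\<close> would sit at an equilibrium of the first order system
  there; uniqueness for this Lipschitz system (Gronwall) forces \<open>vh\<close> to be constant.\<close>
lemma v1_pos: "0 < v1 x"
proof (rule ccontr)
  assume "\<not> 0 < v1 x"
  then have "v1 x = 0" using v1_nonneg[of x] by simp
  moreover have "v2 x = 0"
    by (rule DERIV_local_min[OF v1_deriv[of x] zero_less_one]) (use \<open>v1 x = 0\<close> v1_nonneg in auto)
  ultimately have fz: "f (vh x) = 0" using wave_eq[of x] b_pos by simp
  define z where "z = vh x"
  obtain L where "0 \<le> L" and L: "\<And>u z. u \<in> {0..1} \<Longrightarrow> z \<in> {0..1} \<Longrightarrow> \<bar>f u - f z\<bar> \<le> L * \<bar>u - z\<bar>"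
    using f_lipschitz by blast
  have v2_bound: "\<bar>v2 y\<bar> \<le> \<bar>c\<bar> / \<nu> * \<bar>v1 y\<bar> + b * L / \<nu> * \<bar>vh y - z\<bar>" for y
  proof -
    have f_bound: "\<bar>f (vh y)\<bar> \<le> L * \<bar>vh y - z\<bar>"
      using L[of "vh y" z] fz vh_nonneg vh_le_1 by (simp add: z_def)
    have "\<bar>v2 y\<bar> = \<bar>c * v1 y - b * f (vh y)\<bar> / \<nu>"
      using nu_pos by (simp add: v2_eq abs_divide)
    also have "\<dots> \<le> (\<bar>c\<bar> * \<bar>v1 y\<bar> + b * \<bar>f (vh y)\<bar>) / \<nu>"
      using abs_triangle_ineq4[of "c * v1 y" "b * f (vh y)"] b_pos nu_pos
      by (intro divide_right_mono) (auto simp: abs_mult)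
    also have "\<dots> \<le> (\<bar>c\<bar> * \<bar>v1 y\<bar> + b * (L * \<bar>vh y - z\<bar>)) / \<nu>"
      using f_bound b_pos nu_pos by (intro divide_right_mono add_left_mono mult_left_mono) auto
    also have "\<dots> = \<bar>c\<bar> / \<nu> * \<bar>v1 y\<bar> + b * L / \<nu> * \<bar>vh y - z\<bar>"
      by (simp add: add_divide_distrib)
    finally show ?thesis .
  qed
  define E where "E y = (vh y - z)\<^sup>2 + (v1 y)\<^sup>2" for y
  have "E y = 0" for y
  proof (rule gronwall_vanishing[where E = E])
    show "(E has_real_derivative 2 * (vh y - z) * v1 y + 2 * v1 y * v2 y) (at y)" for y
      unfolding E_def[abs_def] by (rule derivative_eq_intros vh_deriv v1_deriv refl | simp)+
    show "\<bar>2 * (vh y - z) * v1 y + 2 * v1 y * v2 y\<bar> \<le> (1 + 2 * (\<bar>c\<bar> / \<nu>) + b * L / \<nu>) * E y" for y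
      unfolding E_def by (rule energy_derivative_bound[OF v2_bound]) (use nu_pos b_pos \<open>0 \<le> L\<close> in auto)
    show "0 \<le> E y" for y by (simp add: E_def)
    show "E x = 0" by (simp add: E_def z_def \<open>v1 x = 0\<close>)
  qed
  then have "vh y = z" for y
    by (simp add: E_def add_nonneg_eq_0_iff)
  then have vh_const: "vh = (\<lambda>_. z)" ..
  have "z = 0"
    using vh_bot unfolding vh_const by (simp add: tendsto_const_iff)
  moreover have "z = 1"
    using vh_top unfolding vh_const by (simp add: tendsto_const_iff)
  ultimately show False by simp
qed

lemma vh_strict_mono: "strict_mono vh"
proof (rule strict_monoI)
  fix x y :: real assume "x < y"
  then show "vh x < vh y"
    by (rule DERIV_pos_imp_increasing) (use vh_deriv v1_pos in blast)
qed

lemma vh_pos: "0 < vh x"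
  using strict_monoD[OF vh_strict_mono, of "x - 1" x] vh_nonneg[of "x - 1"] by simp

lemma vh_less_1: "vh x < 1"
  using strict_monoD[OF vh_strict_mono, of x "x + 1"] vh_le_1[of "x + 1"] by simp

definition "\<kappa> = c / \<nu>"
definition "q x = b / \<nu> * (f (vh x) / v1 x)"
definition "g x = b / \<nu> * f1 (vh x)"
definition "h x = b / \<nu> * f2 (vh x) * v1 x"

lemma v2_q: "v2 x = v1 x * (\<kappa> - q x)"
  using v1_pos[of x] nu_pos unfolding v2_eq \<kappa>_def q_def by (simp add: field_simps)

lemma ratio_deriv:
  "((\<lambda>y. f (vh y) / v1 y) has_real_derivative \<nu> / b * ((q x)\<^sup>2 - \<kappa> * q x + g x)) (at x)"
proof -
  have "((\<lambda>y. f (vh y) / v1 y) has_real_derivative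
          (f1 (vh x) * v1 x * v1 x - f (vh x) * v2 x) / (v1 x * v1 x)) (at x)"
    using DERIV_divide[OF DERIV_chain2[OF f_deriv vh_deriv] v1_deriv] v1_pos[of x]
    by (simp add: algebra_simps)
  moreover have "(f1 (vh x) * v1 x * v1 x - f (vh x) * v2 x) / (v1 x * v1 x)
      = \<nu> / b * ((q x)\<^sup>2 - \<kappa> * q x + g x)"
    using v1_pos[of x] nu_pos b_pos unfolding q_def g_def \<kappa>_def v2_eq
    by (simp add: field_simps power2_eq_square)
  ultimately show ?thesis by simp
qed

lemma q_deriv: "(q has_real_derivative (q x)\<^sup>2 - \<kappa> * q x + g x) (at x)"
  using DERIV_cmult[OF ratio_deriv, of "b / \<nu>"] nu_pos b_pos unfolding q_def[abs_def] by simp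

lemma g_deriv: "(g has_real_derivative h x) (at x)"
proof -
  have "vh x \<in> interior {0..1}"
    using vh_pos vh_less_1 by auto
  then have "(f1 has_real_derivative f2 (vh x)) (at (vh x))"
    using f2_deriv[of "vh x"] at_within_interior[of "vh x" "{0..1}"] interior_subset by auto
  from DERIV_cmult[OF DERIV_chain2[OF this vh_deriv], of "b / \<nu>"] show ?thesis
    unfolding g_def[abs_def] h_def by (simp add: ac_simps)
qed

lemma h_pos: "vh x < vs \<Longrightarrow> 0 < h x"
  using f2_pos[of "vh x"] vh_pos[of x] v1_pos[of x] nu_pos b_pos by (simp add: h_def)

lemma h_neg: "vs < vh x \<Longrightarrow> h x < 0"
  using f2_neg[of "vh x"] vh_less_1[of x] v1_pos[of x] nu_pos b_pos
  unfolding h_def by (intro mult_neg_pos mult_pos_neg) auto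

lemma g_tendsto_at_bot: "(g \<longlongrightarrow> b / \<nu> * f1 0) at_bot"
  unfolding g_def[abs_def] using f1_cont
  by (intro tendsto_intros isCont_tendsto_compose[OF _ vh_bot]) (simp add: continuous_on_eq_continuous_at)

lemma g_tendsto_at_top: "(g \<longlongrightarrow> b / \<nu> * f1 1) at_top"
  unfolding g_def[abs_def] using f1_cont
  by (intro tendsto_intros isCont_tendsto_compose[OF _ vh_top]) (simp add: continuous_on_eq_continuous_at)

lemma g_limits_neg: "b / \<nu> * f1 0 < 0" "b / \<nu> * f1 1 < 0"
  using mult_pos_neg[OF divide_pos_pos[OF b_pos nu_pos]] f1_signs by auto

lemma q_nonpos_at_bot: "\<forall>\<^sub>F x in at_bot. q x \<le> 0"
  using order_tendstoD(2)[OF vh_bot a_in(1)]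
proof (rule eventually_mono)
  fix x assume "vh x < a"
  then show "q x \<le> 0"
    using f_neg[of "vh x"] vh_pos[of x] v1_pos[of x] nu_pos b_pos
    unfolding q_def by (intro mult_nonneg_nonpos divide_nonpos_pos) auto
qed

lemma q_nonneg_at_top: "\<forall>\<^sub>F x in at_top. 0 \<le> q x"
  using order_tendstoD(1)[OF vh_top a_in(2)]
proof (rule eventually_mono)
  fix x assume "a < vh x"
  then show "0 \<le> q x"
    using f_pos[of "vh x"] vh_less_1[of x] v1_pos[of x] nu_pos b_pos
    unfolding q_def by (intro mult_nonneg_nonneg divide_nonneg_pos) auto
qed

text \<open>Below the inflection point \<open>vs\<close> of \<open>f\<close> the forcing \<open>h = g'\<close> is positive, above it
  negative; so the sign argument runs towards \<open>-\<infinity>\<close> or \<open>+\<infinity>\<close> accordingly.\<close>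
lemma riccati_rhs_pos: "0 < (q x)\<^sup>2 - \<kappa> * q x + g x"
proof (cases "vh x \<le> vs")
  case True
  show ?thesis
  proof (rule riccati_rhs_pos_left[OF q_deriv g_deriv _ g_tendsto_at_bot g_limits_neg(1) q_nonpos_at_bot])
    show "0 < h t" if "t < x" for t
      using strict_monoD[OF vh_strict_mono that] True by (intro h_pos) simp
  qed
next
  case False
  show ?thesis
  proof (rule riccati_rhs_pos_right[OF q_deriv g_deriv _ g_tendsto_at_top g_limits_neg(2) q_nonneg_at_top])
    show "h t < 0" if "x < t" for t
      using strict_monoD[OF vh_strict_mono that] False by (intro h_neg) simp
  qed
qed

lemma ratio_strict_mono: "strict_mono (\<lambda>x. f (vh x) / v1 x)"
proof (rule strict_monoI)
  fix x y :: real assume "x < y"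
  then show "f (vh x) / v1 x < f (vh y) / v1 y"
    by (rule DERIV_pos_imp_increasing)
      (use ratio_deriv riccati_rhs_pos nu_pos b_pos in \<open>blast intro: mult_pos_pos divide_pos_pos\<close>)
qed

lemma q_strict_mono: "strict_mono q"
proof (rule strict_monoI)
  fix x y :: real assume "x < y"
  then show "q x < q y"
    by (rule DERIV_pos_imp_increasing) (use q_deriv riccati_rhs_pos in blast)
qed

lemma v2_div_v1_deriv:
  "((\<lambda>y. v2 y / v1 y) has_real_derivative - ((q x)\<^sup>2 - \<kappa> * q x + g x)) (at x)"
proof -
  have "(\<lambda>y. v2 y / v1 y) = (\<lambda>y. \<kappa> - q y)"
  proof
    fix y show "v2 y / v1 y = \<kappa> - q y"
      using v1_pos[of y] by (simp add: v2_q)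
  qed
  then show ?thesis
    using DERIV_diff[OF DERIV_const q_deriv] by simp
qed

lemma g_bounded: obtains M where "\<And>x. \<bar>g x\<bar> \<le> M"
proof -
  obtain M where M: "\<And>v. v \<in> {0..1} \<Longrightarrow> \<bar>f1 v\<bar> \<le> M"
    using f1_bounded by blast
  have "\<bar>g x\<bar> \<le> b / \<nu> * M" for x
  proof -
    have "\<bar>g x\<bar> = b / \<nu> * \<bar>f1 (vh x)\<bar>"
      using nu_pos b_pos by (simp add: g_def abs_mult)
    also have "\<dots> \<le> b / \<nu> * M"
      using M[of "vh x"] vh_nonneg[of x] vh_le_1[of x] nu_pos b_pos by (intro mult_left_mono) auto
    finally show ?thesis .
  qed
  then show ?thesis using that by blast
qed

lemma q_bdd: "bdd_below (range q)" "bdd_above (range q)"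
proof -
  obtain M where M: "\<And>x. \<bar>g x\<bar> \<le> M"
    using g_bounded by blast
  show "bdd_below (range q)"
    by (rule bdd_belowI2, rule riccati_bounded_below[OF q_deriv less_imp_le[OF riccati_rhs_pos] M])
  show "bdd_above (range q)"
    by (rule bdd_aboveI2, rule riccati_bounded_above[OF q_deriv less_imp_le[OF riccati_rhs_pos] M])
qed

lemma q_tendsto_INF: "(q \<longlongrightarrow> (INF x. q x)) at_bot"
  by (rule mono_tendsto_INF_at_bot[OF strict_mono_mono[OF q_strict_mono] q_bdd(1)])

lemma q_tendsto_SUP: "(q \<longlongrightarrow> (SUP x. q x)) at_top"
  by (rule mono_tendsto_SUP_at_top[OF strict_mono_mono[OF q_strict_mono] q_bdd(2)])

lemma INF_q: "(INF x. q x) = c / (2 * \<nu>) - sqrt ((c / (2 * \<nu>))\<^sup>2 - b / \<nu> * f1 0)"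
  using riccati_limit_at_bot[OF q_deriv q_tendsto_INF g_tendsto_at_bot g_limits_neg(1) q_nonpos_at_bot]
  by (simp add: \<kappa>_def ac_simps)

lemma SUP_q: "(SUP x. q x) = c / (2 * \<nu>) + sqrt ((c / (2 * \<nu>))\<^sup>2 - b / \<nu> * f1 1)"
  using riccati_limit_at_top[OF q_deriv q_tendsto_SUP g_tendsto_at_top g_limits_neg(2) q_nonneg_at_top]
  by (simp add: \<kappa>_def ac_simps)

lemma energy_le_v1: obtains K where "\<And>x. (v1 x)\<^sup>2 + (v2 x)\<^sup>2 \<le> K * (v1 x)\<^sup>2"
proof -
  define R where "R = \<bar>\<kappa>\<bar> + \<bar>INF x. q x\<bar> + \<bar>SUP x. q x\<bar>"
  have "\<bar>\<kappa> - q x\<bar> \<le> R" for x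
    using cINF_lower[OF q_bdd(1) UNIV_I, of x] cSUP_upper[OF UNIV_I q_bdd(2), of x]
    unfolding R_def by linarith
  then have "(\<kappa> - q x)\<^sup>2 \<le> R\<^sup>2" for x
    by (metis abs_ge_zero order_trans power2_abs power_mono)
  then have "(v1 x)\<^sup>2 * (\<kappa> - q x)\<^sup>2 \<le> R\<^sup>2 * (v1 x)\<^sup>2" for x
    by (metis mult.commute mult_left_mono zero_le_power2)
  then have "(v1 x)\<^sup>2 + (v2 x)\<^sup>2 \<le> (1 + R\<^sup>2) * (v1 x)\<^sup>2" for x
    unfolding v2_q power_mult_distrib distrib_right by simp
  then show ?thesis using that by blast
qed

lemma weighted_energy_integrable:
  assumes "(\<lambda>x. exp (- 2 * \<beta> * x) * (v1 x)\<^sup>2) absolutely_integrable_on S" and "S \<in> sets lebesgue"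
  shows "(\<lambda>x. exp (- 2 * \<beta> * x) * ((v1 x)\<^sup>2 + (v2 x)\<^sup>2)) integrable_on S"
proof -
  obtain K where K: "\<And>x. (v1 x)\<^sup>2 + (v2 x)\<^sup>2 \<le> K * (v1 x)\<^sup>2"
    using energy_le_v1 by blast
  show ?thesis
  proof (rule measurable_bounded_by_integrable_imp_integrable)
    have "continuous_on S v1"
      by (rule DERIV_continuous_on[OF has_field_derivative_at_within[OF v1_deriv]])
    then show "(\<lambda>x. exp (- 2 * \<beta> * x) * ((v1 x)\<^sup>2 + (v2 x)\<^sup>2)) \<in> borel_measurable (lebesgue_on S)"
      by (intro continuous_imp_measurable_on_sets_lebesgue continuous_intros
          continuous_on_subset[OF v2_cont] assms(2)) auto
    have "(\<lambda>x. exp (- 2 * \<beta> * x) * (v1 x)\<^sup>2) integrable_on S"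
      using assms(1) by (simp add: absolutely_integrable_on_def)
    from integrable_on_cmult_left[OF this, of K]
    show "(\<lambda>x. K * (exp (- 2 * \<beta> * x) * (v1 x)\<^sup>2)) integrable_on S"
      by simp
    show "norm (exp (- 2 * \<beta> * x) * ((v1 x)\<^sup>2 + (v2 x)\<^sup>2)) \<le> K * (exp (- 2 * \<beta> * x) * (v1 x)\<^sup>2)" for x
      using mult_left_mono[OF K[of x], of "exp (- 2 * \<beta> * x)"] by (simp add: ac_simps)
  qed fact
qed

lemma v1_deriv_q: "(v1 has_real_derivative v1 x * (\<kappa> - q x)) (at x)"
  using v1_deriv[of x] by (simp add: v2_q)

lemma weighted_energy_integrable_atMost:
  assumes "\<alpha> * \<kappa> < \<kappa> - (INF x. q x)"
  shows "(\<lambda>x. exp (- 2 * \<alpha> * \<kappa> * x) * ((v1 x)\<^sup>2 + (v2 x)\<^sup>2)) integrable_on {..0}"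
proof -
  have "(\<lambda>x. exp (- 2 * (\<alpha> * \<kappa>) * x) * (v1 x)\<^sup>2) absolutely_integrable_on {..0}"
    by (rule exp_weighted_square_integrable_at_bot[OF v1_deriv_q v1_nonneg _ assms])
      (intro tendsto_intros q_tendsto_INF)
  from weighted_energy_integrable[OF this] show ?thesis
    by (simp add: mult.assoc)
qed

lemma weighted_energy_integrable_atLeast:
  assumes "\<kappa> - (SUP x. q x) < \<alpha> * \<kappa>"
  shows "(\<lambda>x. exp (- 2 * \<alpha> * \<kappa> * x) * ((v1 x)\<^sup>2 + (v2 x)\<^sup>2)) integrable_on {0..}"
proof -
  have "(\<lambda>x. exp (- 2 * (\<alpha> * \<kappa>) * x) * (v1 x)\<^sup>2) absolutely_integrable_on {0..}"
    by (rule exp_weighted_square_integrable_at_top[OF v1_deriv_q v1_nonneg _ assms])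
      (intro tendsto_intros q_tendsto_SUP)
  from weighted_energy_integrable[OF this] show ?thesis
    by (simp add: mult.assoc)
qed

lemma weighted_energy_integrable_UNIV:
  "(\<lambda>x. exp (- \<kappa> * x) * ((v1 x)\<^sup>2 + (v2 x)\<^sup>2)) integrable_on UNIV"
proof -
  have "0 < (c / (2 * \<nu>))\<^sup>2 - b / \<nu> * f1 0" "0 < (c / (2 * \<nu>))\<^sup>2 - b / \<nu> * f1 1"
    using g_limits_neg zero_le_power2[of "c / (2 * \<nu>)"] by linarith+
  then have roots: "0 < sqrt ((c / (2 * \<nu>))\<^sup>2 - b / \<nu> * f1 0)" "0 < sqrt ((c / (2 * \<nu>))\<^sup>2 - b / \<nu> * f1 1)"
    by simp_all
  show ?thesis
  proof (rule integrable_Un')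
    show "(\<lambda>x. exp (- \<kappa> * x) * ((v1 x)\<^sup>2 + (v2 x)\<^sup>2)) integrable_on {..0}"
      using weighted_energy_integrable_atMost[of "1 / 2"] roots(1) by (simp add: INF_q \<kappa>_def)
    show "(\<lambda>x. exp (- \<kappa> * x) * ((v1 x)\<^sup>2 + (v2 x)\<^sup>2)) integrable_on {0..}"
      using weighted_energy_integrable_atLeast[of "1 / 2"] roots(2) by (simp add: SUP_q \<kappa>_def)
    have "{..0::real} \<inter> {0..} = {0}" by auto
    then show "negligible ({..0::real} \<inter> {0..})" by simp
    show "UNIV = {..0::real} \<union> {0..}" by auto
  qed
qed

end

theorem proposition1p2:
  fixes \<nu> b a vs c :: real
    and f f1 f2 :: "real \<Rightarrow> real"
    and vh v1 v2 :: "real \<Rightarrow> real"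
  assumes nu_pos: "\<nu> > 0" and b_pos: "b > 0"
    and f_deriv: "\<And>x. (f has_real_derivative f1 x) (at x)"
    and f1_cont: "continuous_on UNIV f1"
    and f2_deriv: "\<And>v. v \<in> {0..1} \<Longrightarrow> (f1 has_real_derivative f2 v) (at v within {0..1})"
    and a_in: "0 < a" "a < 1"
    and f_zeros: "f 0 = 0" "f a = 0" "f 1 = 0"
    and f_neg: "\<And>v. v \<in> {0<..<a} \<Longrightarrow> f v < 0"
    and f_pos: "\<And>v. v \<in> {a<..<1} \<Longrightarrow> f v > 0"
    and f1_signs: "f1 0 < 0" "f1 a > 0" "f1 1 < 0"
    and f_int: "integral {0..1} f \<ge> 0"
    and vs_in: "a < vs" "vs < 1"
    and f2_pos: "\<And>v. v \<in> {0..<vs} \<Longrightarrow> f2 v > 0"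
    and f2_neg: "\<And>v. v \<in> {vs<..1} \<Longrightarrow> f2 v < 0"
    and vh_mono: "mono vh"
    and vh_deriv: "\<And>x. (vh has_real_derivative v1 x) (at x)"
    and v1_deriv: "\<And>x. (v1 has_real_derivative v2 x) (at x)"
    and v2_cont: "continuous_on UNIV v2"
    and vh_bot: "(vh \<longlongrightarrow> 0) at_bot"
    and vh_top: "(vh \<longlongrightarrow> 1) at_top"
    and tw: "\<And>x. c * v1 x = \<nu> * v2 x + b * f (vh x)"
  defines "gm \<equiv> (INF x. b / \<nu> * (f (vh x) / v1 x))"
    and "gp \<equiv> (SUP x. b / \<nu> * (f (vh x) / v1 x))"
  shows
    "(\<forall>x. v1 x > 0)
     \<and> strict_mono (\<lambda>x. f (vh x) / v1 x)
     \<and> (\<forall>x. \<exists>D. D > 0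
            \<and> ((\<lambda>y. f (vh y) / v1 y) has_real_derivative D) (at x)
            \<and> ((\<lambda>y. v2 y / v1 y) has_real_derivative (- (b / \<nu> * D))) (at x))
     \<and> bdd_below (range (\<lambda>x. b / \<nu> * (f (vh x) / v1 x)))
     \<and> bdd_above (range (\<lambda>x. b / \<nu> * (f (vh x) / v1 x)))
     \<and> gm = c / (2 * \<nu>) - sqrt ((c / (2 * \<nu>))\<^sup>2 - b / \<nu> * f1 0)
     \<and> gp = c / (2 * \<nu>) + sqrt ((c / (2 * \<nu>))\<^sup>2 - b / \<nu> * f1 1)
     \<and> (\<forall>\<alpha>. \<alpha> * (c / \<nu>) < c / \<nu> - gm \<longrightarrow>
          (\<lambda>x. exp (- 2 * \<alpha> * (c / \<nu>) * x) * ((v1 x)\<^sup>2 + (v2 x)\<^sup>2)) integrable_on {..0})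
     \<and> (\<forall>\<alpha>. \<alpha> * (c / \<nu>) > c / \<nu> - gp \<longrightarrow>
          (\<lambda>x. exp (- 2 * \<alpha> * (c / \<nu>) * x) * ((v1 x)\<^sup>2 + (v2 x)\<^sup>2)) integrable_on {0..})
     \<and> (\<lambda>x. exp (- (c / \<nu>) * x) * ((v1 x)\<^sup>2 + (v2 x)\<^sup>2)) integrable_on UNIV"
proof -
  interpret travelling_wave \<nu> b a vs c f f1 f2 vh v1 v2
    by unfold_locales (use assms in auto)
  have q_eq: "(\<lambda>x. b / \<nu> * (f (vh x) / v1 x)) = q"
    by (simp add: q_def[abs_def])
  have ratio_log_deriv: "\<exists>D. D > 0
      \<and> ((\<lambda>y. f (vh y) / v1 y) has_real_derivative D) (at x)
      \<and> ((\<lambda>y. v2 y / v1 y) has_real_derivative (- (b / \<nu> * D))) (at x)" for x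
    using ratio_deriv[of x] v2_div_v1_deriv[of x] riccati_rhs_pos[of x] nu_pos b_pos
    by (intro exI[of _ "\<nu> / b * ((q x)\<^sup>2 - \<kappa> * q x + g x)"]) auto
  show ?thesis
    unfolding gm_def gp_def q_eq
    using v1_pos ratio_strict_mono ratio_log_deriv q_bdd INF_q SUP_q
      weighted_energy_integrable_atMost[unfolded \<kappa>_def]
      weighted_energy_integrable_atLeast[unfolded \<kappa>_def]
      weighted_energy_integrable_UNIV[unfolded \<kappa>_def]
    by blast
qed

end
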